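(* Let $W_1,\dots,W_m\in\mathbb{R}^{n\times n}$ be signed adjacency matrices of signed digraphs $\mathcal{G}_1,\dots,\mathcal{G}_m$ with $W_k\mathbf{1}=W_k^\top\mathbf{1}=\mathbf{1}$ for all $k$. If $\mathbb{W}=\{W_1,\dots,W_m\}$ is a consensus set for the switched system $\mathbf{x}(t+1)=W_{\sigma(t)}\mathbf{x}(t)$, then for every $k$, $W_k$ is eventually doubly stochastic (hence eventually positive) and $\mathcal{G}_k$ is strongly connected.
   Context: $W_k$ are real matrices (entries of any sign); $\mathcal{G}_k$ has an edge from $j$ to $i$ iff $[W_k]_{ij}\neq 0$. $W$ is eventually positive if there is $t_0\in\mathbb{Z}_{\ge0}$ with $W^t$ entrywise positive for all integers $t\ge t_0$; eventually doubly stochastic means eventually positive with $W\mathbf{1}=W^\top\mathbf{1}=\mathbf{1}$. A switching signal is any map $\sigma:\mathbb{Z}_{\ge0}\to\{1,\dots,m\}$. $\mathbb{W}$ is a consensus set if for every switching signal and every $\mathbf{x}(0)$ there is $\alpha\in\mathbb{R}$ with $\lim_{t\to\infty}\mathbf{x}(t)=\alpha\mathbf{1}$. *)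

theory Defs
  imports "HOL-Analysis.Analysis"
begin

definition ones :: "real ^ 'n" where
  "ones = (\<chi> i. 1)"

primrec mpow :: "real ^ 'n ^ 'n \<Rightarrow> nat \<Rightarrow> real ^ 'n ^ 'n" where
  "mpow W 0 = mat 1"
| "mpow W (Suc t) = W ** mpow W t"

definition eventually_positive :: "real ^ 'n ^ 'n \<Rightarrow> bool" where
  "eventually_positive W \<longleftrightarrow>
     (\<exists>t0::nat. \<forall>t\<ge>t0. \<forall>i j. mpow W t $ i $ j > 0)"

definition eventually_doubly_stochastic :: "real ^ 'n ^ 'n \<Rightarrow> bool" where
  "eventually_doubly_stochastic W \<longleftrightarrow>
     eventually_positive W \<and> W *v ones = ones \<and> transpose W *v ones = ones"

definition graph_edges :: "real ^ 'n ^ 'n \<Rightarrow> ('n \<times> 'n) set" where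
  "graph_edges W = {(j, i). W $ i $ j \<noteq> 0}"

definition strongly_connected :: "real ^ 'n ^ 'n \<Rightarrow> bool" where
  "strongly_connected W \<longleftrightarrow> (\<forall>i j. (i, j) \<in> (graph_edges W)\<^sup>*)"

primrec traj :: "(nat \<Rightarrow> real ^ 'n ^ 'n) \<Rightarrow> (nat \<Rightarrow> nat) \<Rightarrow> real ^ 'n \<Rightarrow> nat \<Rightarrow> real ^ 'n" where
  "traj W \<sigma> x0 0 = x0"
| "traj W \<sigma> x0 (Suc t) = W (\<sigma> t) *v traj W \<sigma> x0 t"

definition consensus_set :: "nat \<Rightarrow> (nat \<Rightarrow> real ^ 'n ^ 'n) \<Rightarrow> bool" where
  "consensus_set m W \<longleftrightarrow>
     (\<forall>\<sigma> :: nat \<Rightarrow> nat. (\<forall>t. \<sigma> t \<in> {1..m}) \<longrightarrow>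
        (\<forall>x0. \<exists>\<alpha>::real. traj W \<sigma> x0 \<longlonglongrightarrow> \<alpha> *\<^sub>R ones))"

end

theory Submission
  imports Defs
begin

text \<open>Along the constant switching signal k the trajectory is W_k^t x, so every power
  sequence W_k^t x converges to a consensus. Since the columns of W_k sum to 1, the entry
  sum of W_k^t x is conserved; starting from the basis vector e_j this forces the consensus
  value to be 1/n, so column j of W_k^t tends to (1/n)\<one> and W_k is eventually positive.
  A nonzero entry (W_k^t)_ij is a sum over walks from j to i, so it exhibits such a walk
  in the graph of W_k, which is therefore strongly connected.\<close>

lemma traj_constant_signal: "traj W (\<lambda>_. k) x = (\<lambda>t. mpow (W k) t *v x)"
proof
  show "traj W (\<lambda>_. k) x t = mpow (W k) t *v x" for t
    by (induction t) (simp_all add: matrix_vector_mul_assoc)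
qed

lemma sum_matrix_vector_mult_if_column_sums_one:
  fixes A :: "real ^ 'n ^ 'n"
  assumes "transpose A *v ones = ones"
  shows "(\<Sum>i\<in>UNIV. (A *v x) $ i) = (\<Sum>i\<in>UNIV. x $ i)"
proof -
  have column_sum: "(\<Sum>i\<in>UNIV. A $ i $ l) = 1" for l
    using arg_cong[OF assms, of "\<lambda>v. v $ l"]
    by (simp add: matrix_vector_mult_def transpose_def ones_def)
  have "(\<Sum>i\<in>UNIV. (A *v x) $ i) = (\<Sum>i\<in>UNIV. \<Sum>l\<in>UNIV. A $ i $ l * x $ l)"
    by (simp add: matrix_vector_mult_def)
  also have "\<dots> = (\<Sum>l\<in>UNIV. x $ l * (\<Sum>i\<in>UNIV. A $ i $ l))"
    by (subst sum.swap) (simp add: sum_distrib_left mult.commute)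
  also have "\<dots> = (\<Sum>i\<in>UNIV. x $ i)"
    by (simp add: column_sum)
  finally show ?thesis .
qed

lemma sum_mpow_vector_mult_if_column_sums_one:
  fixes A :: "real ^ 'n ^ 'n"
  assumes "transpose A *v ones = ones"
  shows "(\<Sum>i\<in>UNIV. (mpow A t *v x) $ i) = (\<Sum>i\<in>UNIV. x $ i)"
  by (induction t)
    (simp_all add: matrix_vector_mul_assoc[symmetric] sum_matrix_vector_mult_if_column_sums_one[OF assms])

lemma mpow_tendsto_inverse_card:
  fixes A :: "real ^ 'n ^ 'n"
  assumes column_sums: "transpose A *v ones = ones"
    and consensus: "\<And>x. \<exists>\<alpha>. (\<lambda>t. mpow A t *v x) \<longlonglongrightarrow> \<alpha> *\<^sub>R ones"
  shows "(\<lambda>t. mpow A t $ i $ j) \<longlonglongrightarrow> 1 / real CARD('n)"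
proof -
  obtain \<alpha> where lim: "(\<lambda>t. mpow A t *v axis j 1) \<longlonglongrightarrow> \<alpha> *\<^sub>R ones"
    using consensus by blast
  have "(\<lambda>t. \<Sum>l\<in>UNIV. (mpow A t *v axis j 1) $ l) \<longlonglongrightarrow> (\<Sum>l\<in>UNIV. (\<alpha> *\<^sub>R (ones :: real ^ 'n)) $ l)"
    by (intro tendsto_sum tendsto_vec_nth lim)
  moreover have "(\<Sum>l\<in>UNIV. (mpow A t *v axis j 1) $ l) = 1" for t
    using sum_mpow_vector_mult_if_column_sums_one[OF column_sums, of t "axis j 1"]
    by (simp add: axis_def)
  ultimately have "(\<lambda>t. 1) \<longlonglongrightarrow> \<alpha> * real CARD('n)"
    by (simp add: ones_def mult.commute)
  then have "1 = \<alpha> * real CARD('n)"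
    by (rule LIMSEQ_unique[OF tendsto_const])
  then have "\<alpha> = 1 / real CARD('n)"
    by (simp add: eq_divide_eq)
  moreover have "(\<lambda>t. (mpow A t *v axis j 1) $ i) \<longlonglongrightarrow> \<alpha>"
    using tendsto_vec_nth[OF lim, of i] by (simp add: ones_def)
  ultimately show ?thesis
    by (simp add: matrix_vector_mult_basis column_def)
qed

lemma eventually_positive_if_mpow_tendsto_consensus:
  fixes A :: "real ^ 'n ^ 'n"
  assumes "transpose A *v ones = ones"
    and "\<And>x. \<exists>\<alpha>. (\<lambda>t. mpow A t *v x) \<longlonglongrightarrow> \<alpha> *\<^sub>R ones"
  shows "eventually_positive A"
proof -
  have "\<forall>\<^sub>F t in sequentially. mpow A t $ i $ j > 0" for i j
    using order_tendstoD(1)[OF mpow_tendsto_inverse_card[OF assms]] by simp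
  then have "\<forall>\<^sub>F t in sequentially. \<forall>i j. mpow A t $ i $ j > 0"
    by (simp add: eventually_all_finite)
  then show ?thesis
    unfolding eventually_positive_def eventually_sequentially by blast
qed

lemma mpow_nonzero_imp_path:
  fixes A :: "real ^ 'n ^ 'n"
  shows "mpow A t $ i $ j \<noteq> 0 \<Longrightarrow> (j, i) \<in> (graph_edges A)\<^sup>*"
proof (induction t arbitrary: i)
  case 0
  then show ?case by (simp add: mat_def split: if_splits)
next
  case (Suc t)
  then have "(\<Sum>l\<in>UNIV. A $ i $ l * mpow A t $ l $ j) \<noteq> 0"
    by (simp add: matrix_matrix_mult_def)
  then obtain l where "A $ i $ l * mpow A t $ l $ j \<noteq> 0"
    by (meson sum.neutral)
  then have "A $ i $ l \<noteq> 0" "mpow A t $ l $ j \<noteq> 0"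
    by auto
  with Suc.IH have "(j, l) \<in> (graph_edges A)\<^sup>*" "(l, i) \<in> graph_edges A"
    by (auto simp: graph_edges_def)
  then show ?case by (rule rtrancl_into_rtrancl)
qed

lemma strongly_connected_if_eventually_positive:
  fixes A :: "real ^ 'n ^ 'n"
  assumes "eventually_positive A"
  shows "strongly_connected A"
proof -
  obtain t where positive: "\<forall>i j. mpow A t $ i $ j > 0"
    using assms unfolding eventually_positive_def by blast
  show ?thesis
    unfolding strongly_connected_def
  proof (intro allI)
    fix i j
    have "mpow A t $ j $ i \<noteq> 0"
      using positive by (simp add: less_imp_neq[symmetric])
    then show "(i, j) \<in> (graph_edges A)\<^sup>*"
      by (rule mpow_nonzero_imp_path)
  qed
qed

theorem corollary5:
  fixes W :: "nat \<Rightarrow> real ^ 'n ^ 'n" and m :: nat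
  assumes "\<forall>k\<in>{1..m}. W k *v ones = ones \<and> transpose (W k) *v ones = ones"
    and "consensus_set m W"
  shows "\<forall>k\<in>{1..m}. eventually_doubly_stochastic (W k) \<and> eventually_positive (W k)
           \<and> strongly_connected (W k)"
proof
  fix k assume k: "k \<in> {1..m}"
  have "\<exists>\<alpha>. (\<lambda>t. mpow (W k) t *v x) \<longlonglongrightarrow> \<alpha> *\<^sub>R ones" for x
    using assms(2)[unfolded consensus_set_def, rule_format, of "\<lambda>_. k" x] k
    by (simp add: traj_constant_signal)
  then have "eventually_positive (W k)"
    using eventually_positive_if_mpow_tendsto_consensus assms(1) k by blast
  then show "eventually_doubly_stochastic (W k) \<and> eventually_positive (W k)
      \<and> strongly_connected (W k)"
    using strongly_connected_if_eventually_positive assms(1) k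
    unfolding eventually_doubly_stochastic_def by blast
qed

end
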